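(* Let $L\ge 1$, let $\mathbf a\in\mathbb Z^L\setminus\{\mathbf 0\}$, let $\mathbf h_1,\ldots,\mathbf h_M\in\mathbb R^L\setminus\{\mathbf 0\}$ be channel states with probabilities $f_1,\ldots,f_M>0$, $\sum_m f_m=1$, and let $\bar P>0$. For $m=1,\ldots,M$ and $P\ge 0$ put $$R_m(P)=\tfrac12\log_2\frac{1+P\|\mathbf h_m\|^2}{\|\mathbf a\|^2+P\big(\|\mathbf h_m\|^2\|\mathbf a\|^2-(\mathbf h_m^T\mathbf a)^2\big)} ,$$ and consider the problem $DP1^{(s)}$: maximize $\sum_{m=1}^M f_m\max(0,R_m(P_m))$ over $P_1,\ldots,P_M$ subject to $\sum_{m=1}^M f_mP_m\le\bar P$ and $P_m\ge 0$ for all $m$. Let $\mathcal G=\{m:\|\mathbf h_m\|^2>\|\mathbf h_m\|^2\|\mathbf a\|^2-(\mathbf h_m^T\mathbf a)^2\}$ (the good set). For $\lambda>0$ define $P_m^{KKT}(\lambda)=\frac1\lambda-\frac1{\|\mathbf h_m\|^2}$ if $\mathbf h_m$ is collinear with $\mathbf a$, and otherwise $$P_m^{KKT}(\lambda)=\frac{-b_m+\sqrt{b_m^2-4d_mc_m(\lambda)}}{2d_m},$$ where $d_m=\|\mathbf h_m\|^2(\|\mathbf h_m\|^2\|\mathbf a\|^2-(\mathbf h_m^T\mathbf a)^2)$, $b_m=2\|\mathbf h_m\|^2\|\mathbf a\|^2-(\mathbf h_m^T\mathbf a)^2$, $c_m(\lambda)=\|\mathbf a\|^2-\frac{(\mathbf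 h_m^T\mathbf a)^2}{\lambda}$. Let $$\lambda_o=\min\Big\{\lambda>0\;\Big|\;R_m(P_m^{KKT}(\lambda))=R_m'(P_m^{KKT}(\lambda))\,P_m^{KKT}(\lambda)\text{ for some } m\in\mathcal G\Big\}$$ and $\bar P_o=\sum_{m\in\mathcal G}f_mP_m^{KKT}(\lambda_o)$. If $\bar P>\bar P_o$, then the optimal active set of $DP1^{(s)}$ equals $\mathcal G$, i.e., every optimal solution $(P_1^*,\ldots,P_M^* )$ satisfies $\{m: P_m^*>0\}=\mathcal G$.
   Context: Two nonzero vectors $\mathbf x_1,\mathbf x_2$ are collinear if $\mathbf x_1=c\,\mathbf x_2$ for some real $c$. The active set of a feasible solution $(P_1,\ldots,P_M)$ of $DP1^{(s)}$ is $\{m\in\{1,\ldots,M\}: P_m>0\}$; an optimal active set is the active set of an optimal solution. $R_m'$ denotes the derivative of $R_m$ in $P$. This is the symmetric power allocation policy (all $L$ users use the same power $P_m$ in state $m$) for compute-and-forward over a fading channel with unit-variance noise. *)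

theory Defs
  imports "HOL-Analysis.Analysis"
begin

definition collinear_vec :: "'a::real_vector \<Rightarrow> 'a \<Rightarrow> bool" where
  "collinear_vec x y \<longleftrightarrow> (\<exists>c::real. x = c *\<^sub>R y)"

definition rate :: "'a::real_inner \<Rightarrow> 'a \<Rightarrow> real \<Rightarrow> real" where
  "rate a h P = (1/2) * log 2 ((1 + P * (norm h)\<^sup>2) /
      ((norm a)\<^sup>2 + P * ((norm h)\<^sup>2 * (norm a)\<^sup>2 - (inner h a)\<^sup>2)))"

definition dcoef :: "'a::real_inner \<Rightarrow> 'a \<Rightarrow> real" where
  "dcoef a h = (norm h)\<^sup>2 * ((norm h)\<^sup>2 * (norm a)\<^sup>2 - (inner h a)\<^sup>2)"

definition bcoef :: "'a::real_inner \<Rightarrow> 'a \<Rightarrow> real" where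
  "bcoef a h = 2 * (norm h)\<^sup>2 * (norm a)\<^sup>2 - (inner h a)\<^sup>2"

definition ccoef :: "'a::real_inner \<Rightarrow> 'a \<Rightarrow> real \<Rightarrow> real" where
  "ccoef a h lam = (norm a)\<^sup>2 - (inner h a)\<^sup>2 / lam"

definition PKKT :: "'a::real_inner \<Rightarrow> 'a \<Rightarrow> real \<Rightarrow> real" where
  "PKKT a h lam =
     (if collinear_vec h a then 1 / lam - 1 / (norm h)\<^sup>2
      else (- bcoef a h + sqrt ((bcoef a h)\<^sup>2 - 4 * dcoef a h * ccoef a h lam))
           / (2 * dcoef a h))"

definition good_set :: "'a::real_inner \<Rightarrow> (nat \<Rightarrow> 'a) \<Rightarrow> nat \<Rightarrow> nat set" where
  "good_set a h M = {m \<in> {1..M}. (norm (h m))\<^sup>2 > (norm (h m))\<^sup>2 * (norm a)\<^sup>2 - (inner (h m) a)\<^sup>2}"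

definition DP1_feasible :: "(nat \<Rightarrow> real) \<Rightarrow> nat \<Rightarrow> real \<Rightarrow> (nat \<Rightarrow> real) \<Rightarrow> bool" where
  "DP1_feasible f M Pbar P \<longleftrightarrow> (\<Sum>m=1..M. f m * P m) \<le> Pbar \<and> (\<forall>m\<in>{1..M}. P m \<ge> 0)"

definition DP1_obj :: "'a::real_inner \<Rightarrow> (nat \<Rightarrow> 'a) \<Rightarrow> (nat \<Rightarrow> real) \<Rightarrow> nat \<Rightarrow> (nat \<Rightarrow> real) \<Rightarrow> real" where
  "DP1_obj a h f M P = (\<Sum>m=1..M. f m * max 0 (rate a (h m) (P m)))"

definition DP1_optimal :: "'a::real_inner \<Rightarrow> (nat \<Rightarrow> 'a) \<Rightarrow> (nat \<Rightarrow> real) \<Rightarrow> nat \<Rightarrow> real \<Rightarrow> (nat \<Rightarrow> real) \<Rightarrow> bool" where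
  "DP1_optimal a h f M Pbar P \<longleftrightarrow> DP1_feasible f M Pbar P \<and>
     (\<forall>Q. DP1_feasible f M Pbar Q \<longrightarrow> DP1_obj a h f M Q \<le> DP1_obj a h f M P)"

definition active_set :: "nat \<Rightarrow> (nat \<Rightarrow> real) \<Rightarrow> nat set" where
  "active_set M P = {m \<in> {1..M}. P m > 0}"

definition tangency :: "'a::real_inner \<Rightarrow> 'a \<Rightarrow> real \<Rightarrow> bool" where
  "tangency a h lam \<longleftrightarrow>
     rate a h (PKKT a h lam) = deriv (rate a h) (PKKT a h lam) * PKKT a h lam"

end

theory Submission
  imports Defs
begin

(* For a good state m, R_m is strictly concave and increasing on [0, \<infinity>) with
   R_m' = (h_m\<^sup>T a)\<^sup>2 / (2 ln 2 q_m), where q_m(P) = (1 + P |h_m|\<^sup>2)(|a|\<^sup>2 + P D_m),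
   D_m = |h_m|\<^sup>2 |a|\<^sup>2 - (h_m\<^sup>T a)\<^sup>2, and P_m^KKT(\<lambda>) is the point where R_m' = \<lambda> / (2 ln 2).
   The intercept R_m(P) - R_m'(P) P of the tangent at P is increasing in P, and the
   tangency condition says that it vanishes at P_m^KKT(\<lambda>).  Hence for \<lambda> < \<lambda>_o the point
   P_m^KKT(\<lambda>) is positive and its tangent passes above the origin.  The total power
   \<Sum>_G f_m P_m^KKT(\<lambda>) is continuous, unbounded as \<lambda> \<rightarrow> 0 and below Pbar at \<lambda>_o, so some
   \<lambda>' < \<lambda>_o spends exactly Pbar.  Allocating P_m^KKT(\<lambda>') on G and 0 elsewhere then
   maximises every term max(0, R_m(P)) - \<lambda>' P / (2 ln 2) uniquely (on bad states R_m \<le> 0),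
   so it is the unique optimum of DP1^(s), and its active set is G. *)

(* P^KKT(\<lambda>) is the root of kkt_poly a h P = (h\<^sup>T a)\<^sup>2 / \<lambda> on the branch where kkt_poly
   increases; there rate_slope equals \<lambda> / (2 ln 2). *)
definition kkt_poly :: "'a::real_inner \<Rightarrow> 'a \<Rightarrow> real \<Rightarrow> real" where
  "kkt_poly a h P = dcoef a h * P\<^sup>2 + bcoef a h * P + (norm a)\<^sup>2"

definition rate_slope :: "'a::real_inner \<Rightarrow> 'a \<Rightarrow> real \<Rightarrow> real" where
  "rate_slope a h P = (inner h a)\<^sup>2 / (2 * ln 2 * kkt_poly a h P)"

definition tangent_intercept :: "'a::real_inner \<Rightarrow> 'a \<Rightarrow> real \<Rightarrow> real" where
  "tangent_intercept a h P = rate a h P - rate_slope a h P * P"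

lemma kkt_poly_eq:
  "kkt_poly a h P = (1 + P * (norm h)\<^sup>2) *
     ((norm a)\<^sup>2 + P * ((norm h)\<^sup>2 * (norm a)\<^sup>2 - (inner h a)\<^sup>2))"
  unfolding kkt_poly_def dcoef_def bcoef_def by (simp add: algebra_simps power2_eq_square)

lemma rate_has_real_derivative:
  fixes a h :: "'a::real_inner"
  assumes num: "0 < 1 + P * (norm h)\<^sup>2"
    and den: "0 < (norm a)\<^sup>2 + P * ((norm h)\<^sup>2 * (norm a)\<^sup>2 - (inner h a)\<^sup>2)"
  shows "(rate a h has_real_derivative rate_slope a h P) (at P)"
proof -
  define H A g where "H = (norm h)\<^sup>2" and "A = (norm a)\<^sup>2" and "g = (inner h a)\<^sup>2"
  define N E where "N = 1 + P * H" and "E = A + P * (H * A - g)"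
  have "N > 0" "E > 0" using num den unfolding N_def E_def H_def A_def g_def .
  moreover have "H * E - N * (H * A - g) = g"
    unfolding N_def E_def by (simp add: algebra_simps)
  ultimately have "((\<lambda>x. 1 / 2 * log 2 ((1 + x * H) / (A + x * (H * A - g))))
      has_real_derivative g / (2 * ln 2 * (N * E))) (at P)"
    by (auto intro!: derivative_eq_intros simp flip: N_def E_def)
  then show ?thesis
    unfolding rate_def[abs_def] rate_slope_def kkt_poly_eq H_def A_def g_def N_def E_def .
qed

lemma inner_sq_le_norm_sq_mult: "(inner h a)\<^sup>2 \<le> (norm h)\<^sup>2 * (norm a)\<^sup>2"
  using Cauchy_Schwarz_ineq[of h a] by (simp add: power2_norm_eq_inner)

lemma rate_nonpos_if_not_good:
  assumes A: "1 \<le> (norm a)\<^sup>2"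
    and bad: "(norm h)\<^sup>2 \<le> (norm h)\<^sup>2 * (norm a)\<^sup>2 - (inner h a)\<^sup>2" and P: "0 \<le> P"
  shows "rate a h P \<le> 0"
proof -
  define N E where "N = 1 + P * (norm h)\<^sup>2"
    and "E = (norm a)\<^sup>2 + P * ((norm h)\<^sup>2 * (norm a)\<^sup>2 - (inner h a)\<^sup>2)"
  have "0 < N" unfolding N_def using P by (simp add: add_pos_nonneg)
  moreover have "N \<le> E" unfolding N_def E_def using A mult_left_mono[OF bad P] by linarith
  ultimately have "0 < N / E" "N / E \<le> 1" by auto
  then show ?thesis unfolding rate_def N_def[symmetric] E_def[symmetric] by simp
qed

lemma norm_sq_ge_1_if_int_vector:
  fixes a :: "real ^ 'n"
  assumes "\<forall>i. a $ i \<in> \<int>" and "a \<noteq> 0"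
  shows "1 \<le> (norm a)\<^sup>2"
proof -
  obtain i where "a $ i \<noteq> 0" using \<open>a \<noteq> 0\<close> by (metis vec_eq_iff zero_index)
  then have "1 \<le> \<bar>a $ i\<bar>" using assms(1) by (intro Ints_nonzero_abs_ge1) auto
  also have "\<dots> \<le> norm a" by (rule component_le_norm_cart)
  finally show ?thesis by (simp add: one_le_power)
qed

lemma collinear_vec_iff_inner_sq_eq:
  fixes a h :: "'a::real_inner"
  assumes "a \<noteq> 0"
  shows "collinear_vec h a \<longleftrightarrow> (inner h a)\<^sup>2 = (norm h)\<^sup>2 * (norm a)\<^sup>2"
proof
  assume "collinear_vec h a"
  then obtain c where "h = c *\<^sub>R a" unfolding collinear_vec_def by blast
  then have "inner h a = c * (norm a)\<^sup>2" and "(norm h)\<^sup>2 = c\<^sup>2 * (norm a)\<^sup>2"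
    by (simp_all add: power2_norm_eq_inner power_mult_distrib)
  then show "(inner h a)\<^sup>2 = (norm h)\<^sup>2 * (norm a)\<^sup>2"
    by (simp add: power_mult_distrib power2_eq_square)
next
  assume "(inner h a)\<^sup>2 = (norm h)\<^sup>2 * (norm a)\<^sup>2"
  then have "\<bar>inner h a\<bar> = norm h * norm a"
    by (metis norm_ge_zero power_mult_distrib real_sqrt_abs real_sqrt_unique zero_le_mult_iff)
  then have "norm h *\<^sub>R a = norm a *\<^sub>R h \<or> norm h *\<^sub>R a = - norm a *\<^sub>R h"
    by (simp only: norm_cauchy_schwarz_abs_eq)
  then obtain c where c: "norm a *\<^sub>R h = c *\<^sub>R a"
  proof (elim disjE)
    assume "norm h *\<^sub>R a = norm a *\<^sub>R h"
    then show thesis using that[of "norm h"] by simp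
  next
    assume "norm h *\<^sub>R a = - norm a *\<^sub>R h"
    then show thesis using that[of "- norm h"] by simp
  qed
  have "h = (1 / norm a) *\<^sub>R (norm a *\<^sub>R h)" using assms by simp
  then have "h = (c / norm a) *\<^sub>R a" unfolding c by simp
  then show "collinear_vec h a" unfolding collinear_vec_def by blast
qed

locale good_channel =
  fixes a h :: "'a::real_inner"
  assumes norm_a_sq_ge_1: "1 \<le> (norm a)\<^sup>2"
    and good: "(norm h)\<^sup>2 * (norm a)\<^sup>2 - (inner h a)\<^sup>2 < (norm h)\<^sup>2"
begin

abbreviation "H \<equiv> (norm h)\<^sup>2"
abbreviation "A \<equiv> (norm a)\<^sup>2"
abbreviation "g \<equiv> (inner h a)\<^sup>2"
abbreviation "D \<equiv> H * A - g"

lemma a_nonzero [simp]: "a \<noteq> 0"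
  using norm_a_sq_ge_1 by (rule contrapos_pn) simp

lemma D_nonneg: "0 \<le> D"
  using inner_sq_le_norm_sq_mult[of h a] by simp

lemma H_pos: "0 < H"
  using good D_nonneg by linarith

lemma g_pos: "0 < g"
proof -
  have "H \<le> H * A" using mult_left_mono[OF norm_a_sq_ge_1, of H] by simp
  then show ?thesis using good by linarith
qed

lemma dcoef_eq: "dcoef a h = H * D"
  unfolding dcoef_def ..

lemma dcoef_nonneg: "0 \<le> dcoef a h"
  unfolding dcoef_eq using H_pos D_nonneg by simp

lemma bcoef_pos: "0 < bcoef a h"
proof -
  have "0 < H * A" using H_pos norm_a_sq_ge_1 by (intro mult_pos_pos) auto
  then show ?thesis unfolding bcoef_def using D_nonneg by linarith
qed

lemma kkt_poly_pos:
  assumes "0 \<le> P" shows "0 < kkt_poly a h P"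
proof -
  have "0 \<le> dcoef a h * P\<^sup>2" "0 \<le> bcoef a h * P"
    using dcoef_nonneg bcoef_pos assms by simp_all
  then show ?thesis unfolding kkt_poly_def using norm_a_sq_ge_1 by linarith
qed

lemma kkt_poly_strict_mono:
  assumes x: "0 < 2 * dcoef a h * x + bcoef a h" and "x < y"
  shows "kkt_poly a h x < kkt_poly a h y"
proof -
  have "0 \<le> dcoef a h * (y - x)" using dcoef_nonneg \<open>x < y\<close> by simp
  then have "0 < (y - x) * (dcoef a h * (y - x) + (2 * dcoef a h * x + bcoef a h))"
    using \<open>x < y\<close> x by (intro mult_pos_pos) linarith+
  also have "\<dots> = kkt_poly a h y - kkt_poly a h x"
    unfolding kkt_poly_def by (simp add: algebra_simps power2_eq_square)
  finally show ?thesis by simp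
qed

lemma kkt_poly_less_iff:
  assumes "0 < 2 * dcoef a h * x + bcoef a h" and "0 < 2 * dcoef a h * y + bcoef a h"
  shows "kkt_poly a h x < kkt_poly a h y \<longleftrightarrow> x < y"
  using kkt_poly_strict_mono[OF assms(1)] kkt_poly_strict_mono[OF assms(2)]
  by (metis less_asym' linorder_neqE_linordered_idom)

lemma kkt_poly_branch: "0 \<le> P \<Longrightarrow> 0 < 2 * dcoef a h * P + bcoef a h"
  using dcoef_nonneg bcoef_pos by (simp add: add_nonneg_pos)

lemma rate_has_real_derivative_nonneg:
  assumes "0 \<le> P" shows "(rate a h has_real_derivative rate_slope a h P) (at P)"
proof (rule rate_has_real_derivative)
  show "0 < 1 + P * H" using assms H_pos by (simp add: add_pos_nonneg)
  have "0 \<le> P * D" using assms D_nonneg by simp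
  then show "0 < A + P * D" using norm_a_sq_ge_1 by linarith
qed

lemma rate_slope_pos: "0 \<le> P \<Longrightarrow> 0 < rate_slope a h P"
  unfolding rate_slope_def using g_pos kkt_poly_pos by simp

lemma rate_slope_strict_antimono:
  assumes "0 \<le> x" and "x < y"
  shows "rate_slope a h y < rate_slope a h x"
proof -
  have "kkt_poly a h x < kkt_poly a h y"
    using kkt_poly_strict_mono[OF kkt_poly_branch] assms by blast
  then show ?thesis
    unfolding rate_slope_def using g_pos kkt_poly_pos[OF assms(1)]
    by (intro divide_strict_left_mono) auto
qed

lemma rate_slope_tendsto_0: "(rate_slope a h \<longlongrightarrow> 0) at_top"
proof -
  have "filterlim (\<lambda>P. bcoef a h * P) at_top at_top"
    using bcoef_pos by (intro filterlim_tendsto_pos_mult_at_top[OF tendsto_const] filterlim_ident)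
  moreover have "\<forall>\<^sub>F P in at_top. bcoef a h * P \<le> kkt_poly a h P"
    using eventually_ge_at_top[of 0]
    by eventually_elim (simp add: kkt_poly_def dcoef_nonneg)
  ultimately have "filterlim (kkt_poly a h) at_top at_top"
    by (rule filterlim_at_top_mono)
  then have "filterlim (\<lambda>P. 2 * ln 2 * kkt_poly a h P) at_infinity at_top"
    by (intro filterlim_at_top_imp_at_infinity filterlim_tendsto_pos_mult_at_top[OF tendsto_const]) auto
  then show ?thesis
    unfolding rate_slope_def[abs_def] by (rule tendsto_divide_0[OF tendsto_const])
qed

lemma rate_below_tangent:
  assumes "0 \<le> x" and "0 \<le> y" and "x \<noteq> y"
  shows "rate a h x < rate a h y + rate_slope a h y * (x - y)"
proof -
  have mvt: "\<exists>z. u < z \<and> z < v \<and> rate a h v - rate a h u = (v - u) * rate_slope a h z"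
    if "0 \<le> u" and "u < v" for u v
    using MVT2[OF \<open>u < v\<close>, of "rate a h" "rate_slope a h"] rate_has_real_derivative_nonneg that by force
  show ?thesis
  proof (cases "y < x")
    case True
    with mvt obtain z where z: "y < z" "rate a h x - rate a h y = (x - y) * rate_slope a h z"
      using assms by blast
    have "rate_slope a h z < rate_slope a h y"
      using rate_slope_strict_antimono \<open>0 \<le> y\<close> z(1) by blast
    then have "(x - y) * rate_slope a h z < (x - y) * rate_slope a h y"
      using True by simp
    then show ?thesis using z(2) by (simp add: algebra_simps)
  next
    case False
    with assms have "x < y" by simp
    with mvt obtain z where z: "x < z" "z < y" "rate a h y - rate a h x = (y - x) * rate_slope a h z"
      using assms by blast
    have "rate_slope a h y < rate_slope a h z"
      using rate_slope_strict_antimono \<open>0 \<le> x\<close> z(1,2) by force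
    then have "(y - x) * rate_slope a h y < (y - x) * rate_slope a h z"
      using \<open>x < y\<close> by simp
    then show ?thesis using z(3) by (simp add: algebra_simps)
  qed
qed

lemma tangent_intercept_strict_mono:
  assumes "0 \<le> x" and "x < y"
  shows "tangent_intercept a h x < tangent_intercept a h y"
proof -
  have "rate a h x < rate a h y + rate_slope a h y * (x - y)"
    using rate_below_tangent assms by simp
  moreover have "rate_slope a h y * x \<le> rate_slope a h x * x"
    using rate_slope_strict_antimono[OF assms] assms(1) by (intro mult_right_mono) auto
  ultimately show ?thesis
    unfolding tangent_intercept_def by (simp add: algebra_simps)
qed

lemma tangent_intercept_mono:
  "0 \<le> x \<Longrightarrow> x \<le> y \<Longrightarrow> tangent_intercept a h x \<le> tangent_intercept a h y"
  by (metis order_le_less tangent_intercept_strict_mono)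

lemma tangent_intercept_0_nonpos: "tangent_intercept a h 0 \<le> 0"
proof -
  have "0 < 1 / A" "1 / A \<le> 1" using norm_a_sq_ge_1 by (simp_all add: divide_le_eq_1)
  then show ?thesis unfolding tangent_intercept_def rate_def by simp
qed

lemma isCont_tangent_intercept:
  assumes "0 \<le> P" shows "isCont (tangent_intercept a h) P"
proof -
  have "isCont (rate a h) P" using rate_has_real_derivative_nonneg[OF assms] by (rule DERIV_isCont)
  moreover have "isCont (rate_slope a h) P"
    unfolding rate_slope_def[abs_def] kkt_poly_def
    using kkt_poly_pos[OF assms, unfolded kkt_poly_def] by (intro continuous_intros) auto
  ultimately show ?thesis
    unfolding tangent_intercept_def[abs_def] by (intro continuous_intros)
qed

lemma ex_tangent_intercept_pos: "\<exists>P\<ge>0. 0 < tangent_intercept a h P"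
proof -
  define P1 where "P1 = A / (H - D)"
  have "0 < H - D" using good by linarith
  then have "0 < P1" and "P1 * (H - D) = A"
    unfolding P1_def using norm_a_sq_ge_1 by (simp_all add: zero_less_divide_iff)
  then have "A + P1 * D < 1 + P1 * H" by (simp add: algebra_simps)
  moreover have "0 < A + P1 * D" using norm_a_sq_ge_1 D_nonneg \<open>0 < P1\<close> by (simp add: add_pos_nonneg)
  ultimately have "0 < rate a h P1" unfolding rate_def by simp
  then have "\<forall>\<^sub>F P in at_top. P1 * rate_slope a h P < rate a h P1"
    by (rule order_tendstoD(2)[OF tendsto_mult_right_zero[OF rate_slope_tendsto_0]])
  moreover have "\<forall>\<^sub>F P in at_top. P1 < P" by (rule eventually_gt_at_top)
  ultimately obtain P where P: "P1 < P" "P1 * rate_slope a h P < rate a h P1"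
    using eventually_happens'[OF trivial_limit_at_top_linorder eventually_conj] by blast
  have "rate a h P1 < rate a h P + rate_slope a h P * (P1 - P)"
    using rate_below_tangent \<open>0 < P1\<close> P(1) by simp
  then have "0 < tangent_intercept a h P"
    using P(2) unfolding tangent_intercept_def by (simp add: algebra_simps)
  then show ?thesis using \<open>0 < P1\<close> P(1) by (intro exI[of _ P]) simp
qed

lemma tangent_intercept_root_above:
  assumes "0 \<le> Y" and "tangent_intercept a h Y \<le> 0"
  obtains t where "Y \<le> t" and "tangent_intercept a h t = 0"
proof -
  obtain P where "0 \<le> P" "0 < tangent_intercept a h P"
    using ex_tangent_intercept_pos by blast
  then have "0 \<le> tangent_intercept a h (max P Y)"
    using tangent_intercept_mono[of P "max P Y"] by simp
  moreover have "continuous_on {Y..max P Y} (tangent_intercept a h)"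
    using isCont_tangent_intercept \<open>0 \<le> Y\<close> by (intro continuous_at_imp_continuous_on) auto
  ultimately show ?thesis
    using IVT'[of "tangent_intercept a h" Y 0 "max P Y"] assms(2) that by auto
qed

lemma collinear_iff_D_eq_0: "collinear_vec h a \<longleftrightarrow> D = 0"
  using collinear_vec_iff_inner_sq_eq[OF a_nonzero, of h] by linarith

lemma dcoef_pos_iff: "0 < dcoef a h \<longleftrightarrow> \<not> collinear_vec h a"
  unfolding dcoef_eq collinear_iff_D_eq_0 using H_pos D_nonneg by (simp add: less_le)

lemma PKKT_root:
  assumes lam: "0 < lam"
  shows "kkt_poly a h (PKKT a h lam) = g / lam \<and> 0 < 2 * dcoef a h * PKKT a h lam + bcoef a h"
proof (cases "collinear_vec h a")
  case True
  then have "D = 0" by (simp add: collinear_iff_D_eq_0)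
  then have "dcoef a h = 0" and "bcoef a h = g" and "H * A = g"
    unfolding dcoef_eq bcoef_def by simp_all
  moreover have "PKKT a h lam = 1 / lam - 1 / H" unfolding PKKT_def using True by simp
  ultimately have "kkt_poly a h (PKKT a h lam) = H * A * (1 / lam - 1 / H) + A"
    and "2 * dcoef a h * PKKT a h lam + bcoef a h = g"
    unfolding kkt_poly_def by simp_all
  moreover have "H * A * (1 / lam - 1 / H) + A = g / lam"
    using \<open>H * A = g\<close> H_pos by (simp add: field_simps)
  ultimately show ?thesis using g_pos by simp
next
  case False
  define d b r where "d = dcoef a h" and "b = bcoef a h"
    and "r = sqrt ((bcoef a h)\<^sup>2 - 4 * dcoef a h * ccoef a h lam)"
  have "0 < d" unfolding d_def using False dcoef_pos_iff by simp
  have disc: "(bcoef a h)\<^sup>2 - 4 * dcoef a h * ccoef a h lam = g\<^sup>2 + 4 * d * g / lam"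
    unfolding d_def dcoef_def bcoef_def ccoef_def using lam
    by (simp add: field_simps power2_eq_square)
  moreover have "0 < g\<^sup>2 + 4 * d * g / lam"
    using \<open>0 < d\<close> g_pos lam by (intro add_pos_nonneg) simp_all
  ultimately have "0 < r" and r_sq: "r\<^sup>2 = b\<^sup>2 - 4 * d * ccoef a h lam"
    unfolding r_def b_def d_def by simp_all
  have PKKT: "PKKT a h lam = (r - b) / (2 * d)"
    unfolding PKKT_def r_def b_def d_def using False by simp
  have "kkt_poly a h (PKKT a h lam) = (r\<^sup>2 - b\<^sup>2) / (4 * d) + A"
    unfolding PKKT kkt_poly_def d_def[symmetric] b_def[symmetric] using \<open>0 < d\<close>
    by (simp add: field_simps power2_eq_square)
  also have "\<dots> = g / lam"
    unfolding r_sq ccoef_def using \<open>0 < d\<close> by simp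
  finally show ?thesis
    using \<open>0 < r\<close> \<open>0 < d\<close> unfolding PKKT d_def[symmetric] b_def[symmetric] by simp
qed

lemma PKKT_kkt_poly_inverse:
  assumes "0 \<le> t" shows "PKKT a h (g / kkt_poly a h t) = t"
proof -
  define lam where "lam = g / kkt_poly a h t"
  have "0 < lam" unfolding lam_def using g_pos kkt_poly_pos[OF assms] by simp
  note root = PKKT_root[OF this]
  have "kkt_poly a h (PKKT a h lam) = kkt_poly a h t"
    using root g_pos kkt_poly_pos[OF assms] unfolding lam_def by simp
  then have "\<not> PKKT a h lam < t" and "\<not> t < PKKT a h lam"
    using kkt_poly_less_iff[OF conjunct2[OF root] kkt_poly_branch[OF assms]]
      kkt_poly_less_iff[OF kkt_poly_branch[OF assms] conjunct2[OF root]] by simp_all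
  then show ?thesis unfolding lam_def[symmetric] by simp
qed

lemma PKKT_strict_antimono:
  assumes "0 < lam" and "lam < lam'"
  shows "PKKT a h lam' < PKKT a h lam"
proof -
  have "0 < lam'" using assms by simp
  note root = PKKT_root[OF \<open>0 < lam\<close>] PKKT_root[OF \<open>0 < lam'\<close>]
  have "kkt_poly a h (PKKT a h lam') < kkt_poly a h (PKKT a h lam)"
    using root assms g_pos by (simp add: divide_strict_left_mono)
  then show ?thesis
    using kkt_poly_less_iff[OF conjunct2[OF root(2)] conjunct2[OF root(1)]] by simp
qed

lemma le_PKKT:
  assumes "0 \<le> X" and "0 < lam" and "lam \<le> g / kkt_poly a h X"
  shows "X \<le> PKKT a h lam"
  using PKKT_strict_antimono[OF \<open>0 < lam\<close>, of "g / kkt_poly a h X"] assms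
    PKKT_kkt_poly_inverse[OF \<open>0 \<le> X\<close>] by (cases "lam = g / kkt_poly a h X") auto

lemma rate_slope_PKKT: "0 < lam \<Longrightarrow> rate_slope a h (PKKT a h lam) = lam / (2 * ln 2)"
  unfolding rate_slope_def using PKKT_root g_pos by simp

lemma tangency_iff_tangent_intercept_eq_0:
  assumes "0 \<le> PKKT a h lam"
  shows "tangency a h lam \<longleftrightarrow> tangent_intercept a h (PKKT a h lam) = 0"
  using DERIV_imp_deriv[OF rate_has_real_derivative_nonneg[OF assms]]
  unfolding tangency_def tangent_intercept_def by simp

lemma isCont_PKKT: "0 < lam \<Longrightarrow> isCont (PKKT a h) lam"
  using dcoef_pos_iff unfolding PKKT_def[abs_def] ccoef_def
  by (cases "collinear_vec h a") (auto intro!: continuous_intros)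

lemma PKKT_pos_below_tangency:
  assumes "0 < lam" and no_tangency: "\<And>l. 0 < l \<Longrightarrow> l \<le> lam \<Longrightarrow> \<not> tangency a h l"
  shows "0 < PKKT a h lam \<and> 0 < tangent_intercept a h (PKKT a h lam)"
proof (rule ccontr)
  assume "\<not> ?thesis"
  then have "tangent_intercept a h (max (PKKT a h lam) 0) \<le> 0"
    using tangent_intercept_0_nonpos by (cases "0 < PKKT a h lam") auto
  then obtain t where t: "max (PKKT a h lam) 0 \<le> t" "tangent_intercept a h t = 0"
    using tangent_intercept_root_above[of "max (PKKT a h lam) 0"] by auto
  then have "0 \<le> t" by simp
  define l where "l = g / kkt_poly a h t"
  have "0 < l" unfolding l_def using g_pos kkt_poly_pos[OF \<open>0 \<le> t\<close>] by simp
  have PKKT_l: "PKKT a h l = t" unfolding l_def by (rule PKKT_kkt_poly_inverse[OF \<open>0 \<le> t\<close>])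
  then have "tangency a h l"
    using tangency_iff_tangent_intercept_eq_0[of l] t(2) \<open>0 \<le> t\<close> by simp
  moreover have "l \<le> lam"
    using PKKT_strict_antimono[OF \<open>0 < lam\<close>, of l] t(1) PKKT_l by fastforce
  ultimately show False using no_tangency \<open>0 < l\<close> by blast
qed

lemma lagrangian_strict_max_at_PKKT:
  assumes "0 < lam" and no_tangency: "\<And>l. 0 < l \<Longrightarrow> l \<le> lam \<Longrightarrow> \<not> tangency a h l"
    and "0 \<le> x" and "x \<noteq> PKKT a h lam"
  shows "max 0 (rate a h x) - lam / (2 * ln 2) * x
    < max 0 (rate a h (PKKT a h lam)) - lam / (2 * ln 2) * PKKT a h lam"
proof -
  define Q mu where "Q = PKKT a h lam" and "mu = lam / (2 * ln 2)"
  have "0 < Q" and "0 < tangent_intercept a h Q"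
    using PKKT_pos_below_tangency[OF assms(1,2)] unfolding Q_def by auto
  moreover have "rate_slope a h Q = mu"
    unfolding Q_def mu_def using rate_slope_PKKT[OF assms(1)] .
  ultimately have "mu * Q < rate a h Q" and "0 < mu * Q"
    unfolding tangent_intercept_def using rate_slope_pos[of Q] by (simp_all add: mult.commute)
  moreover have "rate a h x < rate a h Q + mu * (x - Q)"
    using rate_below_tangent[of x Q] \<open>rate_slope a h Q = mu\<close> \<open>0 < Q\<close> assms(3,4)
    unfolding Q_def by simp
  moreover have "0 \<le> mu * x" unfolding mu_def using assms(1,3) by simp
  ultimately show ?thesis
    unfolding Q_def[symmetric] mu_def[symmetric] by (simp add: algebra_simps)
qed

end

lemma DP1_optimal_eq_lagrangian_maximizer:
  assumes f_pos: "\<forall>m\<in>{1..M}. 0 < f m" and "0 \<le> mu"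
    and Q_feasible: "DP1_feasible f M Pbar Q" and Q_budget: "(\<Sum>m=1..M. f m * Q m) = Pbar"
    and Q_max: "\<And>m x. m \<in> {1..M} \<Longrightarrow> 0 \<le> x \<Longrightarrow> x \<noteq> Q m \<Longrightarrow>
      max 0 (rate a (h m) x) - mu * x < max 0 (rate a (h m) (Q m)) - mu * Q m"
    and P_opt: "DP1_optimal a h f M Pbar P"
  shows "\<forall>m\<in>{1..M}. P m = Q m"
proof (rule ccontr)
  define L where "L Z = (\<Sum>m=1..M. f m * (max 0 (rate a (h m) (Z m)) - mu * Z m))" for Z
  have obj: "DP1_obj a h f M Z = L Z + mu * (\<Sum>m=1..M. f m * Z m)" for Z
    unfolding DP1_obj_def L_def
    by (simp add: sum_distrib_left sum_subtractf algebra_simps)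
  have P_nonneg: "\<forall>m\<in>{1..M}. 0 \<le> P m" and P_budget: "(\<Sum>m=1..M. f m * P m) \<le> Pbar"
    using P_opt unfolding DP1_optimal_def DP1_feasible_def by auto
  assume "\<not> (\<forall>m\<in>{1..M}. P m = Q m)"
  then obtain k where k: "k \<in> {1..M}" "P k \<noteq> Q k" by blast
  have le: "max 0 (rate a (h m) (P m)) - mu * P m \<le> max 0 (rate a (h m) (Q m)) - mu * Q m"
    if "m \<in> {1..M}" for m
    using Q_max[OF that] P_nonneg that by (cases "P m = Q m") (auto intro: less_imp_le)
  have "L P < L Q"
    unfolding L_def
  proof (rule sum_strict_mono_ex1)
    show "\<forall>m\<in>{1..M}. f m * (max 0 (rate a (h m) (P m)) - mu * P m)
        \<le> f m * (max 0 (rate a (h m) (Q m)) - mu * Q m)"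
      using le f_pos by (simp add: mult_left_mono less_imp_le)
    show "\<exists>m\<in>{1..M}. f m * (max 0 (rate a (h m) (P m)) - mu * P m)
        < f m * (max 0 (rate a (h m) (Q m)) - mu * Q m)"
      using Q_max[OF k(1) _ k(2)] P_nonneg f_pos k(1) by auto
  qed simp
  moreover have "mu * (\<Sum>m=1..M. f m * P m) \<le> mu * Pbar"
    using P_budget \<open>0 \<le> mu\<close> by (rule mult_left_mono)
  ultimately have "DP1_obj a h f M P < DP1_obj a h f M Q"
    unfolding obj Q_budget by simp
  moreover have "DP1_obj a h f M Q \<le> DP1_obj a h f M P"
    using P_opt Q_feasible unfolding DP1_optimal_def by blast
  ultimately show False by simp
qed

lemma good_channel_if_mem_good_set:
  "1 \<le> (norm a)\<^sup>2 \<Longrightarrow> m \<in> good_set a h M \<Longrightarrow> good_channel a (h m)"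
  unfolding good_set_def by unfold_locales auto

lemma DP1_optimal_eq_kkt_allocation:
  fixes h :: "nat \<Rightarrow> 'a::real_inner"
  assumes A: "1 \<le> (norm a)\<^sup>2" and f_pos: "\<forall>m\<in>{1..M}. 0 < f m" and "0 < lam"
    and no_tangency: "\<And>m l. m \<in> good_set a h M \<Longrightarrow> 0 < l \<Longrightarrow> l \<le> lam \<Longrightarrow> \<not> tangency a (h m) l"
    and budget: "(\<Sum>m\<in>good_set a h M. f m * PKKT a (h m) lam) = Pbar"
    and opt: "DP1_optimal a h f M Pbar P"
  shows "\<forall>m\<in>{1..M}. P m = (if m \<in> good_set a h M then PKKT a (h m) lam else 0)"
proof -
  define G where "G = good_set a h M"
  define Q where "Q m = (if m \<in> G then PKKT a (h m) lam else 0)" for m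
  have good: "good_channel a (h m)" if "m \<in> G" for m
    using good_channel_if_mem_good_set[OF A] that unfolding G_def .
  have "0 < PKKT a (h m) lam" if "m \<in> G" for m
    using good_channel.PKKT_pos_below_tangency[OF good[OF that] \<open>0 < lam\<close>]
      no_tangency[folded G_def, OF that] by blast
  then have Q_nonneg: "0 \<le> Q m" for m
    unfolding Q_def by (simp add: less_imp_le)
  have "G \<subseteq> {1..M}" unfolding G_def good_set_def by auto
  then have "(\<Sum>m=1..M. f m * Q m) = (\<Sum>m\<in>G. f m * Q m)"
    by (intro sum.mono_neutral_right) (auto simp: Q_def)
  also have "\<dots> = Pbar" using budget unfolding G_def[symmetric] by (simp add: Q_def)
  finally have Q_budget: "(\<Sum>m=1..M. f m * Q m) = Pbar" .
  have "\<forall>m\<in>{1..M}. P m = Q m"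
  proof (rule DP1_optimal_eq_lagrangian_maximizer[OF f_pos _ _ Q_budget _ opt])
    show "0 \<le> lam / (2 * ln 2)" using \<open>0 < lam\<close> by simp
    show "DP1_feasible f M Pbar Q"
      unfolding DP1_feasible_def using Q_budget Q_nonneg by simp
    fix m x assume m: "m \<in> {1..M}" and x: "0 \<le> x" "x \<noteq> Q m"
    show "max 0 (rate a (h m) x) - lam / (2 * ln 2) * x
        < max 0 (rate a (h m) (Q m)) - lam / (2 * ln 2) * Q m"
    proof (cases "m \<in> G")
      case True
      then show ?thesis
        using good_channel.lagrangian_strict_max_at_PKKT[OF good[OF True] \<open>0 < lam\<close> _ x(1)]
          no_tangency[folded G_def, OF True] x(2) unfolding Q_def by auto
    next
      case False
      then have "Q m = 0" and "0 < x" using x unfolding Q_def by auto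
      moreover have "(norm (h m))\<^sup>2 \<le> (norm (h m))\<^sup>2 * (norm a)\<^sup>2 - (inner (h m) a)\<^sup>2"
        using False m unfolding G_def good_set_def by auto
      then have "rate a (h m) x \<le> 0" and "rate a (h m) 0 \<le> 0"
        using rate_nonpos_if_not_good[OF A] x(1) by auto
      ultimately show ?thesis using \<open>0 < lam\<close> by simp
    qed
  qed
  then show ?thesis unfolding Q_def G_def .
qed

lemma kkt_level_exists:
  fixes h :: "nat \<Rightarrow> 'a::real_inner"
  assumes "finite G" and "m0 \<in> G" and good: "\<And>m. m \<in> G \<Longrightarrow> good_channel a (h m)"
    and f_pos: "\<And>m. m \<in> G \<Longrightarrow> 0 < f m" and "0 < Pbar" and "0 < lam_o"
    and PKKT_pos: "\<And>m lam. m \<in> G \<Longrightarrow> 0 < lam \<Longrightarrow> lam < lam_o \<Longrightarrow> 0 < PKKT a (h m) lam"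
    and below: "(\<Sum>m\<in>G. f m * PKKT a (h m) lam_o) < Pbar"
  obtains lam where "0 < lam" and "lam < lam_o" and "(\<Sum>m\<in>G. f m * PKKT a (h m) lam) = Pbar"
proof -
  define F where "F lam = (\<Sum>m\<in>G. f m * PKKT a (h m) lam)" for lam
  interpret m0: good_channel a "h m0" using good[OF \<open>m0 \<in> G\<close>] .
  define X where "X = Pbar / f m0"
  have "0 \<le> X" unfolding X_def using \<open>0 < Pbar\<close> f_pos[OF \<open>m0 \<in> G\<close>] by simp
  define lam1 where "lam1 = min (lam_o / 2) (m0.g / kkt_poly a (h m0) X)"
  have "0 < lam1" and "lam1 < lam_o"
    unfolding lam1_def using \<open>0 < lam_o\<close> m0.g_pos m0.kkt_poly_pos[OF \<open>0 \<le> X\<close>] by auto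
  have "Pbar = f m0 * X" unfolding X_def using f_pos[OF \<open>m0 \<in> G\<close>] by simp
  also have "\<dots> \<le> f m0 * PKKT a (h m0) lam1"
    using m0.le_PKKT[OF \<open>0 \<le> X\<close> \<open>0 < lam1\<close>] f_pos[OF \<open>m0 \<in> G\<close>] unfolding lam1_def by simp
  also have "\<dots> \<le> F lam1"
    unfolding F_def using \<open>finite G\<close> \<open>m0 \<in> G\<close> PKKT_pos[OF _ \<open>0 < lam1\<close> \<open>lam1 < lam_o\<close>] f_pos
    by (intro member_le_sum) (auto intro: less_imp_le)
  finally have "Pbar \<le> F lam1" .
  moreover have "continuous_on {lam1..lam_o} F"
    unfolding F_def using \<open>0 < lam1\<close>
    by (intro continuous_at_imp_continuous_on ballI continuous_intros good_channel.isCont_PKKT[OF good]) auto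
  ultimately obtain lam where "lam1 \<le> lam" "lam \<le> lam_o" "F lam = Pbar"
    using IVT2'[of F lam_o Pbar lam1] below \<open>lam1 < lam_o\<close> unfolding F_def by auto
  moreover have "lam \<noteq> lam_o" using below \<open>F lam = Pbar\<close> unfolding F_def by auto
  ultimately have "0 < lam" "lam < lam_o" "F lam = Pbar" using \<open>0 < lam1\<close> by auto
  then show ?thesis unfolding F_def by (rule that)
qed

theorem theorem2:
  fixes a :: "real ^ 'n" and h :: "nat \<Rightarrow> real ^ 'n" and f :: "nat \<Rightarrow> real"
    and M :: nat and Pbar lam_o :: real
  assumes a_int: "\<forall>i. a $ i \<in> \<int>" and a_nz: "a \<noteq> 0"
    and M_pos: "M \<ge> 1"
    and h_nz: "\<forall>m\<in>{1..M}. h m \<noteq> 0"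
    and f_pos: "\<forall>m\<in>{1..M}. f m > 0" and f_sum: "(\<Sum>m=1..M. f m) = 1"
    and Pbar_pos: "Pbar > 0"
    and lam_o_pos: "lam_o > 0"
    and lam_o_mem: "\<exists>m\<in>good_set a h M. tangency a (h m) lam_o"
    and lam_o_min: "\<forall>lam>0. (\<exists>m\<in>good_set a h M. tangency a (h m) lam) \<longrightarrow> lam_o \<le> lam"
    and Pbar_gt: "Pbar > (\<Sum>m\<in>good_set a h M. f m * PKKT a (h m) lam_o)"
    and opt: "DP1_optimal a h f M Pbar P"
  shows "active_set M P = good_set a h M"
proof -
  define G where "G = good_set a h M"
  have A: "1 \<le> (norm a)\<^sup>2" using a_int a_nz by (rule norm_sq_ge_1_if_int_vector)
  have G_sub: "G \<subseteq> {1..M}" unfolding G_def good_set_def by auto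
  have good: "good_channel a (h m)" if "m \<in> G" for m
    using good_channel_if_mem_good_set[OF A] that unfolding G_def .
  have no_tangency: "\<not> tangency a (h m) l" if "m \<in> G" "0 < l" "l < lam_o" for m l
    using lam_o_min that unfolding G_def by (meson linorder_not_le)
  have PKKT_pos: "0 < PKKT a (h m) l" if "m \<in> G" "0 < l" "l < lam_o" for m l
    using good_channel.PKKT_pos_below_tangency[OF good[OF that(1)] that(2)]
      no_tangency[OF that(1)] that(3) by (meson order_le_less_trans)
  obtain m0 where "m0 \<in> G" using lam_o_mem unfolding G_def by blast
  have "finite G" using G_sub finite_subset by blast
  have f_pos_G: "0 < f m" if "m \<in> G" for m using f_pos G_sub that by auto
  obtain lam where lam: "0 < lam" "lam < lam_o" "(\<Sum>m\<in>G. f m * PKKT a (h m) lam) = Pbar"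
    by (rule kkt_level_exists[OF \<open>finite G\<close> \<open>m0 \<in> G\<close> good f_pos_G Pbar_pos lam_o_pos PKKT_pos
          Pbar_gt[folded G_def]])
  have "\<forall>m\<in>{1..M}. P m = (if m \<in> G then PKKT a (h m) lam else 0)"
    unfolding G_def
  proof (rule DP1_optimal_eq_kkt_allocation[OF A f_pos lam(1) _ _ opt])
    show "\<not> tangency a (h m) l" if "m \<in> good_set a h M" "0 < l" "l \<le> lam" for m l
      using no_tangency[unfolded G_def] that lam(2) by simp
    show "(\<Sum>m\<in>good_set a h M. f m * PKKT a (h m) lam) = Pbar" using lam(3) unfolding G_def .
  qed
  then show ?thesis
    unfolding active_set_def G_def[symmetric] using PKKT_pos lam(1,2) G_sub by (auto split: if_splits)
qed

end
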